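(* Let $\Gamma$ be a weighted digraph with vertex set $V=\{1,\dots,n\}$ and arc set $E$, out-forest dimension $d$ and normalized matrix of maximum out-forests $\bar J$. Let $K$ be the vertex set of a basis bicomponent of $\Gamma$; let $K^+$ be the set of vertices reachable by directed paths from $K$ and unreachable from all other basis bicomponents; let $\widetilde K$ be the union of the vertex sets of all basis bicomponents. Let $\mathsf T$ be the set of spanning diverging trees of the restriction $\Gamma_K$ of $\Gamma$ to $K$, and $\mathsf T^j\subseteq\mathsf T$ those diverging from (rooted at) $j$. Let $\Gamma_{-K}$ be the spanning subgraph of $\Gamma$ with arc set $E\setminus E(\Gamma_K)$, and $\mathsf P^{K\to i}$ the set of maximum out-forests of $\Gamma_{-K}$ in which $i$ is reachable from some vertex of $K$. Let $\varepsilon(\cdot)$ denote the weight of a set of subgraphs (sum of weights of its elements) and $\sigma_{n-d}$ the total weight of the maximum out-forests of $\Gamma$. Then: (1) $\bar J$ is row stochastic: $\bar J_{ij}\ge0$ for all $i,j$ and $\sum_{k=1}^n\bar J_{ik}=1$ for all $i$; (2) $\bar J_{ij}\ne0$ if and only if $j\in\widetilde K$ and $i$ is reachable from $j$ in $\Gamma$; (3) if $j\in K$, then for every $i\in V$, $\bar J_{ij}=\varepsilon(\mathsf T^j)\,\varepsilon(\mathsf P^{K\to i})/\sigma_{n-d}$; moreover, if $i\in K^+$ then $\bar J_{ij}=\bar J_{jj}=\varepsilon(\mathsf T^j)/\varepsilon(\mathsf T)$; (4) $\sum_{j\in K}\bar J_{jj}=1$; in particular, if $j$ is an undominated vertex then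 $\bar J_{jj}=1$; (5) if $j_1,j_2\in K$, then the columns satisfy $\bar J_{\cdot j_2}=\big(\varepsilon(\mathsf T^{j_2})/\varepsilon(\mathsf T^{j_1})\big)\bar J_{\cdot j_1}$.
   Context: A weighted digraph $\Gamma$ has no loops and each arc $j\to i$ ($j\ne i$) has a positive weight. A diverging tree is a rooted directed tree with directed paths from its root to all its other vertices; an out-forest of a digraph is a spanning subgraph whose weak components are diverging trees; a maximum out-forest is one with the maximum number of arcs; the out-forest dimension $d$ is the number of trees in a maximum out-forest. The weight of a subgraph is the product of its arc weights (the empty product is $1$). The normalized matrix of maximum out-forests $\bar J$ has $\bar J_{ij}$ equal to the total weight of the maximum out-forests of $\Gamma$ in which $i$ belongs to the tree rooted at $j$, divided by the total weight of all maximum out-forests. A basis bicomponent is a strong component into which no arc enters from outside it; an undominated vertex is a vertex forming by itself a basis bicomponent. Every vertex is reachable from itself. *)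

theory Defs
  imports Complex_Main
begin

text \<open>A weighted digraph on a finite vertex set V: arc set E of pairs (j,i) meaning j \<rightarrow> i,
  weight function w on arcs. Subgraphs (spanning) are given by their arc sets.\<close>

definition sg_weight :: "('a \<times> 'a \<Rightarrow> real) \<Rightarrow> ('a \<times> 'a) set \<Rightarrow> real" where
  "sg_weight w F = (\<Prod>a\<in>F. w a)"

definition set_weight :: "('a \<times> 'a \<Rightarrow> real) \<Rightarrow> ('a \<times> 'a) set set \<Rightarrow> real" where
  "set_weight w S = (\<Sum>F\<in>S. sg_weight w F)"

definition diverging_tree_at :: "'a set \<Rightarrow> ('a \<times> 'a) set \<Rightarrow> 'a \<Rightarrow> bool" where
  "diverging_tree_at C T r \<longleftrightarrow> finite C \<and> T \<subseteq> C \<times> C \<and> r \<in> C \<and>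
     (\<forall>v\<in>C. (r, v) \<in> T\<^sup>*) \<and> card T = card C - 1"

definition diverging_tree :: "'a set \<Rightarrow> ('a \<times> 'a) set \<Rightarrow> bool" where
  "diverging_tree C T \<longleftrightarrow> (\<exists>r. diverging_tree_at C T r)"

definition wcomp :: "'a set \<Rightarrow> ('a \<times> 'a) set \<Rightarrow> 'a \<Rightarrow> 'a set" where
  "wcomp V F v = {u\<in>V. (v, u) \<in> (F \<union> F\<inverse>)\<^sup>*}"

definition out_forest :: "'a set \<Rightarrow> ('a \<times> 'a) set \<Rightarrow> ('a \<times> 'a) set \<Rightarrow> bool" where
  "out_forest V E F \<longleftrightarrow> F \<subseteq> E \<and>
     (\<forall>v\<in>V. diverging_tree (wcomp V F v) (F \<inter> (wcomp V F v \<times> wcomp V F v)))"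

definition max_out_forests :: "'a set \<Rightarrow> ('a \<times> 'a) set \<Rightarrow> ('a \<times> 'a) set set" where
  "max_out_forests V E = {F. out_forest V E F \<and>
     (\<forall>F'. out_forest V E F' \<longrightarrow> card F' \<le> card F)}"

definition in_tree_rooted :: "'a set \<Rightarrow> ('a \<times> 'a) set \<Rightarrow> 'a \<Rightarrow> 'a \<Rightarrow> bool" where
  "in_tree_rooted V F i j \<longleftrightarrow>
     diverging_tree_at (wcomp V F i) (F \<inter> (wcomp V F i \<times> wcomp V F i)) j"

definition sigma_max :: "'a set \<Rightarrow> ('a \<times> 'a) set \<Rightarrow> ('a \<times> 'a \<Rightarrow> real) \<Rightarrow> real" where
  "sigma_max V E w = set_weight w (max_out_forests V E)"

definition Jbar :: "'a set \<Rightarrow> ('a \<times> 'a) set \<Rightarrow> ('a \<times> 'a \<Rightarrow> real) \<Rightarrow> 'a \<Rightarrow> 'a \<Rightarrow> real" where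
  "Jbar V E w i j =
     set_weight w {F\<in>max_out_forests V E. in_tree_rooted V F i j} / sigma_max V E w"

definition scomp :: "'a set \<Rightarrow> ('a \<times> 'a) set \<Rightarrow> 'a \<Rightarrow> 'a set" where
  "scomp V E v = {u\<in>V. (v, u) \<in> E\<^sup>* \<and> (u, v) \<in> E\<^sup>*}"

definition basis_bicomp :: "'a set \<Rightarrow> ('a \<times> 'a) set \<Rightarrow> 'a set \<Rightarrow> bool" where
  "basis_bicomp V E K \<longleftrightarrow> (\<exists>v\<in>V. K = scomp V E v) \<and>
     (\<forall>(a, b)\<in>E. b \<in> K \<longrightarrow> a \<in> K)"

definition undominated :: "'a set \<Rightarrow> ('a \<times> 'a) set \<Rightarrow> 'a \<Rightarrow> bool" where
  "undominated V E j \<longleftrightarrow> basis_bicomp V E {j}"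

definition K_plus :: "'a set \<Rightarrow> ('a \<times> 'a) set \<Rightarrow> 'a set \<Rightarrow> 'a set" where
  "K_plus V E K = {i\<in>V. (\<exists>k\<in>K. (k, i) \<in> E\<^sup>*) \<and>
     (\<forall>K'. basis_bicomp V E K' \<and> K' \<noteq> K \<longrightarrow> (\<forall>k\<in>K'. (k, i) \<notin> E\<^sup>*))}"

definition K_tilde :: "'a set \<Rightarrow> ('a \<times> 'a) set \<Rightarrow> 'a set" where
  "K_tilde V E = \<Union>{K. basis_bicomp V E K}"

definition trees_K :: "('a \<times> 'a) set \<Rightarrow> 'a set \<Rightarrow> ('a \<times> 'a) set set" where
  "trees_K E K = {T. T \<subseteq> E \<inter> (K \<times> K) \<and> diverging_tree K T}"

definition trees_K_at :: "('a \<times> 'a) set \<Rightarrow> 'a set \<Rightarrow> 'a \<Rightarrow> ('a \<times> 'a) set set" where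
  "trees_K_at E K j = {T. T \<subseteq> E \<inter> (K \<times> K) \<and> diverging_tree_at K T j}"

definition P_K_to :: "'a set \<Rightarrow> ('a \<times> 'a) set \<Rightarrow> 'a set \<Rightarrow> 'a \<Rightarrow> ('a \<times> 'a) set set" where
  "P_K_to V E K i = {F\<in>max_out_forests V (E - E \<inter> (K \<times> K)). \<exists>k\<in>K. (k, i) \<in> F\<^sup>*}"

end

theory Submission
  imports Defs
begin

(*
  An out-forest is identified with its arc set F, a relation in which every vertex has at most
  one incoming arc and which is acyclic; the roots of F are the vertices without incoming arc,
  and the tree containing i is rooted at j iff j is a root reaching i.  Since
  |F| + #roots(F) = |V|, maximum out-forests are the forests with the fewest roots.

  Basis bicomponents form a "source family": disjoint, strongly connected sets closed under
  incoming arcs from which every vertex is reachable.  For any source family B every forest has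
  a root in each member, and by growing a forest greedily from one representative per member we
  obtain forests with exactly |B| roots.  Hence the maximum out-forests are exactly the forests
  with |B| roots, one in each member.  We apply this twice: to the basis bicomponents of the
  graph, and to the family {{k} | k in K} plus the other basis bicomponents, which is a source
  family of the graph with the arcs inside K deleted.

  For j in K this yields a weight-preserving bijection between maximum out-forests in which j is
  a root reaching i and pairs (T, G) of a spanning tree of K rooted at j and a maximum out-forest
  of the reduced graph in which i is reachable from K.  This product formula is part (3); the
  other parts follow from it by summation, using that each row of Jbar sums to one.
*)

section \<open>Forests as relations\<close>

definition unique_parents :: "('a \<times> 'a) set \<Rightarrow> bool" where
  "unique_parents F \<longleftrightarrow> (\<forall>a b c. (a, c) \<in> F \<longrightarrow> (b, c) \<in> F \<longrightarrow> a = b)"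

definition is_root :: "('a \<times> 'a) set \<Rightarrow> 'a \<Rightarrow> bool" where
  "is_root F x \<longleftrightarrow> (\<forall>u. (u, x) \<notin> F)"

definition forest :: "'a set \<Rightarrow> ('a \<times> 'a) set \<Rightarrow> bool" where
  "forest V F \<longleftrightarrow> F \<subseteq> V \<times> V \<and> unique_parents F \<and> acyclic F"

definition roots :: "'a set \<Rightarrow> ('a \<times> 'a) set \<Rightarrow> 'a set" where
  "roots V F = {v \<in> V. is_root F v}"

lemma forest_subset: "forest V F \<Longrightarrow> G \<subseteq> F \<Longrightarrow> forest V G"
  unfolding forest_def unique_parents_def by (meson acyclic_subset subset_trans subsetD)

lemma forest_empty: "forest V {}"
  unfolding forest_def unique_parents_def by (auto simp: acyclic_def)

lemma ancestors_chain:
  assumes "unique_parents F" "(a, x) \<in> F\<^sup>*" "(b, x) \<in> F\<^sup>*"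
  shows "(a, b) \<in> F\<^sup>* \<or> (b, a) \<in> F\<^sup>*"
  using assms(2,3)
proof (induction x arbitrary: b rule: rtrancl_induct)
  case base then show ?case by simp
next
  case (step y z)
  from step.prems show ?case
  proof (cases rule: rtranclE)
    case base then show ?thesis using step.hyps by auto
  next
    case (step y')
    then have "y' = y" using assms(1) \<open>(y, z) \<in> F\<close> unfolding unique_parents_def by blast
    then show ?thesis using step.IH step by auto
  qed
qed

lemma reach_root: "is_root F r \<Longrightarrow> (x, r) \<in> F\<^sup>* \<Longrightarrow> x = r"
  by (erule rtranclE) (auto simp: is_root_def)

lemma root_unique:
  assumes "unique_parents F" "is_root F r" "is_root F r'" "(r, v) \<in> F\<^sup>*" "(r', v) \<in> F\<^sup>*"
  shows "r = r'"
  using ancestors_chain[OF assms(1,4,5)] reach_root assms(2,3) by metis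

lemma path_into_closed:
  assumes "(a, b) \<in> F\<^sup>*" "b \<in> C" "\<And>x y. (x, y) \<in> F \<Longrightarrow> y \<in> C \<Longrightarrow> x \<in> C"
  shows "a \<in> C \<and> (a, b) \<in> (F \<inter> C \<times> C)\<^sup>*"
  using assms(1)
proof (induction a rule: converse_rtrancl_induct)
  case base then show ?case using assms(2) by simp
next
  case (step a a')
  then have "a \<in> C" using assms(3) by blast
  with step show ?case by (meson IntI converse_rtrancl_into_rtrancl mem_Sigma_iff)
qed

text \<open>A path either avoids the arcs inside K, or a final segment of it starts in K and
  avoids them (cut the path at its last vertex in K).\<close>
lemma path_outside:
  assumes "(u, v) \<in> F\<^sup>*"
  shows "(u, v) \<in> (F - F \<inter> K \<times> K)\<^sup>* \<or> (\<exists>k\<in>K. (k, v) \<in> (F - F \<inter> K \<times> K)\<^sup>*)"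
  using assms
proof (induction v rule: rtrancl_induct)
  case (step y z)
  then show ?case by (cases "z \<in> K") (auto intro: rtrancl_into_rtrancl)
qed simp

lemma acyclic_if_rooted:
  assumes "F \<subseteq> V \<times> V" "unique_parents F" "\<forall>v\<in>V. \<exists>r. is_root F r \<and> (r, v) \<in> F\<^sup>*"
  shows "acyclic F"
proof -
  have no_cycle: "(u, u) \<notin> F\<^sup>+" if "(r, u) \<in> F\<^sup>*" "is_root F r" for r u
    using that
  proof (induction u rule: rtrancl_induct)
    case base then show ?case by (meson is_root_def tranclD2)
  next
    case (step y z)
    show ?case
    proof
      assume "(z, z) \<in> F\<^sup>+"
      then obtain x where x: "(z, x) \<in> F\<^sup>*" "(x, z) \<in> F" by (meson tranclD2)
      then have "x = y" using assms(2) step.hyps(2) unfolding unique_parents_def by blast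
      then have "(y, y) \<in> F\<^sup>+" using x step.hyps(2) by (meson rtrancl_into_trancl2)
      with step show False by auto
    qed
  qed
  show ?thesis unfolding acyclic_def
  proof
    fix x show "(x, x) \<notin> F\<^sup>+"
    proof
      assume cycle: "(x, x) \<in> F\<^sup>+"
      then have "x \<in> V" using assms(1) by (auto dest: tranclD)
      then obtain r where "is_root F r" "(r, x) \<in> F\<^sup>*" using assms(3) by blast
      then show False using no_cycle cycle by blast
    qed
  qed
qed

lemma root_exists:
  assumes "finite V" "forest V F"
  shows "\<exists>r. is_root F r \<and> (r, v) \<in> F\<^sup>*"
proof -
  have "finite F" using assms unfolding forest_def by (meson finite_SigmaI finite_subset)
  then have "wf F" using assms finite_acyclic_wf unfolding forest_def by blast
  then obtain z where z: "z \<in> {u. (u, v) \<in> F\<^sup>*}" "\<forall>y. (y, z) \<in> F \<longrightarrow> y \<notin> {u. (u, v) \<in> F\<^sup>*}"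
    unfolding wf_eq_minimal by (metis mem_Collect_eq rtrancl.rtrancl_refl)
  then have "is_root F z" unfolding is_root_def by (auto intro: converse_rtrancl_into_rtrancl)
  then show ?thesis using z(1) by blast
qed

text \<open>Arcs of a forest correspond to its non-root vertices.\<close>
lemma card_forest:
  assumes "finite V" "forest V F"
  shows "card F + card (roots V F) = card V"
proof -
  have FV: "F \<subseteq> V \<times> V" and up: "unique_parents F" using assms(2) unfolding forest_def by auto
  have "bij_betw snd F (V - roots V F)"
    unfolding bij_betw_def
  proof
    show "inj_on snd F" using up unfolding inj_on_def unique_parents_def by auto
    show "snd ` F = V - roots V F" using FV unfolding roots_def is_root_def by force
  qed
  then have "card F = card (V - roots V F)" by (rule bij_betw_same_card)
  moreover have "roots V F \<subseteq> V" unfolding roots_def by auto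
  ultimately show ?thesis using assms(1)
    by (metis card_Diff_subset card_mono finite_subset le_add_diff_inverse2)
qed

lemma diverging_tree_atI:
  assumes "finite C" "T \<subseteq> C \<times> C" "r \<in> C" "unique_parents T" "is_root T r"
    "\<forall>v\<in>C. (r, v) \<in> T\<^sup>*"
  shows "diverging_tree_at C T r"
proof -
  have "bij_betw snd T (C - {r})"
    unfolding bij_betw_def
  proof
    show "inj_on snd T" using assms(4) unfolding inj_on_def unique_parents_def by auto
    show "snd ` T = C - {r}"
    proof
      show "snd ` T \<subseteq> C - {r}" using assms(2,5) by (auto simp: is_root_def)
      show "C - {r} \<subseteq> snd ` T"
      proof
        fix v assume v: "v \<in> C - {r}"
        then have "(r, v) \<in> T\<^sup>*" using assms(6) by auto
        then obtain y where "(y, v) \<in> T" using v by (auto elim: rtranclE)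
        then show "v \<in> snd ` T" by force
      qed
    qed
  qed
  then have "card T = card C - 1" using assms(1,3) by (simp add: bij_betw_same_card)
  then show ?thesis using assms unfolding diverging_tree_at_def by auto
qed

text \<open>Conversely, the arc count forces unique parents and makes r a root: choosing a
  parent for each non-root vertex already yields all arcs.\<close>
lemma diverging_tree_atD:
  assumes "diverging_tree_at C T r"
  shows "unique_parents T" "is_root T r"
proof -
  have fC: "finite C" and TC: "T \<subseteq> C \<times> C" and rC: "r \<in> C"
    and reach: "\<forall>v\<in>C. (r, v) \<in> T\<^sup>*" and cT: "card T = card C - 1"
    using assms unfolding diverging_tree_at_def by auto
  define p where "p v = (SOME u. (u, v) \<in> T)" for v
  have p_arc: "(p v, v) \<in> T" if v: "v \<in> C - {r}" for v
  proof -
    have "(r, v) \<in> T\<^sup>*" using reach v by auto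
    then obtain y where "(y, v) \<in> T" using v by (auto elim: rtranclE)
    then show ?thesis unfolding p_def by (rule someI)
  qed
  define P where "P = (\<lambda>v. (p v, v)) ` (C - {r})"
  have "card P = card (C - {r})" unfolding P_def by (rule card_image) (auto simp: inj_on_def)
  also have "\<dots> = card T" using cT fC rC by simp
  finally have "P = T" using p_arc finite_subset[OF TC] fC unfolding P_def
    by (metis (no_types, lifting) card_subset_eq finite_SigmaI image_subsetI)
  then have T: "T = (\<lambda>v. (p v, v)) ` (C - {r})" unfolding P_def by simp
  show "unique_parents T" unfolding unique_parents_def by (subst T)+ auto
  show "is_root T r" unfolding is_root_def by (subst T) auto
qed

lemma wcomp_self: "i \<in> V \<Longrightarrow> i \<in> wcomp V F i"
  unfolding wcomp_def by auto

lemma wcomp_closed: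
  assumes "F \<subseteq> V \<times> V" "(x, y) \<in> F" "y \<in> wcomp V F i"
  shows "x \<in> wcomp V F i"
proof -
  have "(i, y) \<in> (F \<union> F\<inverse>)\<^sup>*" using assms unfolding wcomp_def by auto
  then have "(i, x) \<in> (F \<union> F\<inverse>)\<^sup>*" using assms by (meson UnI2 converse_iff rtrancl.rtrancl_into_rtrancl)
  then show ?thesis using assms unfolding wcomp_def by auto
qed

lemma forest_component_tree:
  assumes fV: "finite V" and fo: "forest V F" and iV: "i \<in> V"
    and rj: "is_root F j" and ji: "(j, i) \<in> F\<^sup>*"
  shows "diverging_tree_at (wcomp V F i) (F \<inter> wcomp V F i \<times> wcomp V F i) j"
proof -
  define C where "C = wcomp V F i"
  have FV: "F \<subseteq> V \<times> V" and up: "unique_parents F" using fo unfolding forest_def by auto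
  have closed: "x \<in> C" if "(x, y) \<in> F" "y \<in> C" for x y
    using wcomp_closed[OF FV] that unfolding C_def by blast
  have iC: "i \<in> C" unfolding C_def by (rule wcomp_self[OF iV])
  have jC: "j \<in> C" using path_into_closed[OF ji iC] closed by metis
  have below_j: "(j, u) \<in> F\<^sup>*" if "(i, u) \<in> (F \<union> F\<inverse>)\<^sup>*" for u
    using that
  proof (induction u rule: rtrancl_induct)
    case base then show ?case using ji .
  next
    case (step y z)
    show ?case
    proof (cases "(y, z) \<in> F")
      case True then show ?thesis using step by auto
    next
      case False
      then have zy: "(z, y) \<in> F" using step by auto
      obtain r where r: "is_root F r" "(r, z) \<in> F\<^sup>*" using root_exists[OF fV fo] by blast
      then have "(r, y) \<in> F\<^sup>*" using zy by simp
      then have "r = j" using root_unique[OF up r(1) rj _ step.IH] by blast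
      then show ?thesis using r by simp
    qed
  qed
  show ?thesis unfolding C_def[symmetric]
  proof (rule diverging_tree_atI)
    show "finite C" using fV unfolding C_def wcomp_def by auto
    show "unique_parents (F \<inter> C \<times> C)" using up unfolding unique_parents_def by auto
    show "is_root (F \<inter> C \<times> C) j" using rj unfolding is_root_def by auto
    show "\<forall>v\<in>C. (j, v) \<in> (F \<inter> C \<times> C)\<^sup>*"
    proof
      fix v assume "v \<in> C"
      then have "(j, v) \<in> F\<^sup>*" using below_j unfolding C_def wcomp_def by auto
      then show "(j, v) \<in> (F \<inter> C \<times> C)\<^sup>*" using path_into_closed[of j v F C] closed \<open>v \<in> C\<close> by metis
    qed
  qed (use jC in auto)
qed

text \<open>Gluing a tree on K with root j into a forest G in which no arc enters K gives a
  forest with root j: every vertex still lies below a root.\<close>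
lemma forest_glue_tree:
  assumes fV: "finite V" and KV: "K \<subseteq> V" and TK: "T \<subseteq> K \<times> K" and upT: "unique_parents T"
    and rj: "is_root T j" and reach: "\<forall>v\<in>K. (j, v) \<in> T\<^sup>*" and j: "j \<in> K"
    and foG: "forest V G" and G_out: "\<forall>(a, b)\<in>G. b \<notin> K"
  shows "forest V (T \<union> G)" and "is_root (T \<union> G) j"
proof -
  have GV: "G \<subseteq> V \<times> V" and upG: "unique_parents G" using foG unfolding forest_def by auto
  have FV: "T \<union> G \<subseteq> V \<times> V" using TK GV KV by auto
  have up: "unique_parents (T \<union> G)" unfolding unique_parents_def
  proof (intro allI impI)
    fix a b c assume "(a, c) \<in> T \<union> G" "(b, c) \<in> T \<union> G"
    then show "a = b" using TK upT upG G_out unfolding unique_parents_def by (cases "c \<in> K") blast+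
  qed
  show root_j: "is_root (T \<union> G) j" using rj j G_out unfolding is_root_def by auto
  have T_sub: "T\<^sup>* \<subseteq> (T \<union> G)\<^sup>*" and G_sub: "G\<^sup>* \<subseteq> (T \<union> G)\<^sup>*" by (simp_all add: rtrancl_mono)
  have "\<exists>r. is_root (T \<union> G) r \<and> (r, v) \<in> (T \<union> G)\<^sup>*" for v
  proof -
    obtain r where r: "is_root G r" "(r, v) \<in> G\<^sup>*" using root_exists[OF fV foG] by blast
    show ?thesis
    proof (cases "r \<in> K")
      case True
      then have "(j, v) \<in> (T \<union> G)\<^sup>*" using reach r(2) T_sub G_sub by (meson rtrancl_trans subsetD)
      then show ?thesis using root_j by blast
    next
      case False
      then have "is_root (T \<union> G) r" using r(1) TK unfolding is_root_def by auto
      then show ?thesis using r(2) G_sub by blast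
    qed
  qed
  then have "acyclic (T \<union> G)" using acyclic_if_rooted[OF FV up] by blast
  then show "forest V (T \<union> G)" using FV up unfolding forest_def by blast
qed

lemma out_forest_iff_forest:
  assumes fV: "finite V" and EV: "E \<subseteq> V \<times> V"
  shows "out_forest V E F \<longleftrightarrow> F \<subseteq> E \<and> forest V F"
proof
  assume of: "out_forest V E F"
  then have FE: "F \<subseteq> E" unfolding out_forest_def by auto
  then have FV: "F \<subseteq> V \<times> V" using EV by auto
  have tree: "\<exists>r. diverging_tree_at (wcomp V F v) (F \<inter> wcomp V F v \<times> wcomp V F v) r"
    if "v \<in> V" for v
    using of that unfolding out_forest_def diverging_tree_def by auto
  have root_in_tree: "is_root F r \<and> (r, v) \<in> F\<^sup>*"
    if "v \<in> V" "diverging_tree_at (wcomp V F v) (F \<inter> wcomp V F v \<times> wcomp V F v) r" for v r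
  proof -
    have rC: "r \<in> wcomp V F v" and "(r, v) \<in> (F \<inter> wcomp V F v \<times> wcomp V F v)\<^sup>*"
      using that wcomp_self[OF that(1)] unfolding diverging_tree_at_def by auto
    then have "(r, v) \<in> F\<^sup>*" by (meson inf_le1 rtrancl_mono subsetD)
    moreover have "is_root F r"
      using diverging_tree_atD(2)[OF that(2)] wcomp_closed[OF FV _ rC] rC unfolding is_root_def by blast
    ultimately show ?thesis by blast
  qed
  have up: "unique_parents F" unfolding unique_parents_def
  proof (intro allI impI)
    fix a b c assume ac: "(a, c) \<in> F" and bc: "(b, c) \<in> F"
    then have cV: "c \<in> V" using FV by auto
    obtain r where r: "diverging_tree_at (wcomp V F c) (F \<inter> wcomp V F c \<times> wcomp V F c) r"
      using tree[OF cV] by blast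
    have "a \<in> wcomp V F c" "b \<in> wcomp V F c" "c \<in> wcomp V F c"
      using wcomp_closed[OF FV] ac bc wcomp_self[OF cV] by auto
    then show "a = b" using diverging_tree_atD(1)[OF r] ac bc unfolding unique_parents_def by blast
  qed
  have "acyclic F"
  proof (rule acyclic_if_rooted[OF FV up], intro ballI)
    fix v assume "v \<in> V"
    then show "\<exists>r. is_root F r \<and> (r, v) \<in> F\<^sup>*" using tree root_in_tree by blast
  qed
  then show "F \<subseteq> E \<and> forest V F" using FE FV up unfolding forest_def by auto
next
  assume F: "F \<subseteq> E \<and> forest V F"
  show "out_forest V E F" unfolding out_forest_def diverging_tree_def
  proof (intro conjI ballI)
    fix v assume "v \<in> V"
    obtain r where "is_root F r" "(r, v) \<in> F\<^sup>*" using root_exists[OF fV] F by blast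
    then show "\<exists>r. diverging_tree_at (wcomp V F v) (F \<inter> wcomp V F v \<times> wcomp V F v) r"
      using forest_component_tree[OF fV _ \<open>v \<in> V\<close>] F by blast
  qed (use F in auto)
qed

lemma finite_max_out_forests: "finite E \<Longrightarrow> finite (max_out_forests V E)"
proof -
  have "max_out_forests V E \<subseteq> Pow E" unfolding max_out_forests_def out_forest_def by auto
  then show "finite E \<Longrightarrow> ?thesis" by (meson finite_Pow_iff finite_subset)
qed

lemma in_tree_rooted_iff:
  assumes fV: "finite V" and fo: "forest V F" and iV: "i \<in> V"
  shows "in_tree_rooted V F i j \<longleftrightarrow> is_root F j \<and> (j, i) \<in> F\<^sup>*"
proof
  assume "in_tree_rooted V F i j"
  then have tree: "diverging_tree_at (wcomp V F i) (F \<inter> wcomp V F i \<times> wcomp V F i) j"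
    unfolding in_tree_rooted_def .
  have FV: "F \<subseteq> V \<times> V" using fo unfolding forest_def by auto
  have jC: "j \<in> wcomp V F i" and "(j, i) \<in> (F \<inter> wcomp V F i \<times> wcomp V F i)\<^sup>*"
    using tree wcomp_self[OF iV] unfolding diverging_tree_at_def by auto
  then have "(j, i) \<in> F\<^sup>*" by (meson inf_le1 rtrancl_mono subsetD)
  moreover have "is_root F j"
    using diverging_tree_atD(2)[OF tree] wcomp_closed[OF FV _ jC] jC unfolding is_root_def by blast
  ultimately show "is_root F j \<and> (j, i) \<in> F\<^sup>*" by blast
next
  assume "is_root F j \<and> (j, i) \<in> F\<^sup>*"
  then show "in_tree_rooted V F i j"
    unfolding in_tree_rooted_def using forest_component_tree[OF fV fo iV] by blast
qed

abbreviation basis_bicomps :: "'a set \<Rightarrow> ('a \<times> 'a) set \<Rightarrow> 'a set set" where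
  "basis_bicomps V E \<equiv> {K. basis_bicomp V E K}"

lemma scomp_eq: "x \<in> scomp V E v \<Longrightarrow> scomp V E x = scomp V E v"
  unfolding scomp_def by (auto intro: rtrancl_trans)

lemma basis_bicomp_subset: "basis_bicomp V E K \<Longrightarrow> K \<subseteq> V"
  unfolding basis_bicomp_def scomp_def by auto

lemma basis_bicomp_nonempty: "basis_bicomp V E K \<Longrightarrow> K \<noteq> {}"
  unfolding basis_bicomp_def scomp_def by auto

lemma basis_bicomp_connected: "basis_bicomp V E K \<Longrightarrow> x \<in> K \<Longrightarrow> y \<in> K \<Longrightarrow> (x, y) \<in> E\<^sup>*"
  unfolding basis_bicomp_def scomp_def by (auto intro: rtrancl_trans)

lemma basis_bicomp_closed: "basis_bicomp V E K \<Longrightarrow> (a, b) \<in> E \<Longrightarrow> b \<in> K \<Longrightarrow> a \<in> K"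
  unfolding basis_bicomp_def by auto

lemma basis_bicomp_disjoint:
  assumes "basis_bicomp V E K1" "basis_bicomp V E K2" "x \<in> K1" "x \<in> K2"
  shows "K1 = K2"
  using assms scomp_eq unfolding basis_bicomp_def by metis

text \<open>Every vertex is reachable from some basis bicomponent: take a source of the strict
  reachability order below it; its strong component receives no arc from outside.\<close>
lemma reachable_from_basis_bicomp:
  assumes fV: "finite V" and EV: "E \<subseteq> V \<times> V" and vV: "v \<in> V"
  shows "\<exists>K. basis_bicomp V E K \<and> (\<exists>k\<in>K. (k, v) \<in> E\<^sup>*)"
proof -
  define S where "S = {(x, u). (x, u) \<in> E\<^sup>* \<and> (u, x) \<notin> E\<^sup>*}"
  have "S \<subseteq> E\<^sup>+" unfolding S_def by (auto simp: rtrancl_eq_or_trancl)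
  then have "S \<subseteq> V \<times> V" using trancl_subset_Sigma[OF EV] by blast
  then have "finite S" using fV by (meson finite_SigmaI finite_subset)
  moreover have "trans S" "irrefl S"
    unfolding S_def trans_def irrefl_def by (auto intro: rtrancl_trans)
  then have "acyclic S" by (simp add: acyclic_irrefl trancl_id)
  ultimately have "wf S" by (simp add: finite_acyclic_wf)
  then obtain z where z: "z \<in> {u. (u, v) \<in> E\<^sup>*}" "\<forall>y. (y, z) \<in> S \<longrightarrow> y \<notin> {u. (u, v) \<in> E\<^sup>*}"
    unfolding wf_eq_minimal by (metis mem_Collect_eq rtrancl.rtrancl_refl)
  have source: "(z, y) \<in> E\<^sup>*" if "(y, z) \<in> E\<^sup>*" for y
    using that z by (auto simp: S_def intro: rtrancl_trans)
  have zV: "z \<in> V" using path_into_closed[of z v E V] z(1) vV EV by blast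
  have "basis_bicomp V E (scomp V E z)" unfolding basis_bicomp_def
  proof (intro conjI ballI)
    show "\<exists>v\<in>V. scomp V E z = scomp V E v" using zV by auto
    fix p assume "p \<in> E"
    then obtain a b where p: "p = (a, b)" "(a, b) \<in> E" by (cases p) auto
    have "a \<in> scomp V E z" if "b \<in> scomp V E z"
    proof -
      have "(a, z) \<in> E\<^sup>*" using that p unfolding scomp_def by (auto intro: converse_rtrancl_into_rtrancl)
      then show ?thesis using source p EV unfolding scomp_def by auto
    qed
    then show "case p of (a, b) \<Rightarrow> b \<in> scomp V E z \<longrightarrow> a \<in> scomp V E z" using p by simp
  qed
  moreover have "z \<in> scomp V E z" using zV unfolding scomp_def by auto
  ultimately show ?thesis using z(1) by blast
qed

section \<open>Growing forests\<close>

definition partial_forest :: "'a set \<Rightarrow> ('a \<times> 'a) set \<Rightarrow> 'a set \<Rightarrow> ('a \<times> 'a) set \<Rightarrow> bool" where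
  "partial_forest V E R F \<longleftrightarrow> F \<subseteq> E \<and> forest V F \<and> (\<forall>r\<in>R. is_root F r) \<and>
     (\<forall>v\<in>V. is_root F v \<or> (\<exists>r\<in>R. (r, v) \<in> F\<^sup>*))"

lemma partial_forest_empty: "partial_forest V E R {}"
  unfolding partial_forest_def by (simp add: forest_empty is_root_def)

lemma partial_forest_extend:
  assumes pf: "partial_forest V E R F" and EV: "E \<subseteq> V \<times> V" and ab: "(a, b) \<in> E"
    and a: "\<exists>r\<in>R. (r, a) \<in> F\<^sup>*" and b: "\<not> (\<exists>r\<in>R. (r, b) \<in> F\<^sup>*)"
  shows "partial_forest V E R (insert (a, b) F)" and "(a, b) \<notin> F"
proof -
  have FE: "F \<subseteq> E" and fo: "forest V F" and R: "\<forall>r\<in>R. is_root F r"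
    and hang: "\<forall>v\<in>V. is_root F v \<or> (\<exists>r\<in>R. (r, v) \<in> F\<^sup>*)" using pf unfolding partial_forest_def by auto
  have up: "unique_parents F" and FV: "F \<subseteq> V \<times> V" and ac: "acyclic F" using fo unfolding forest_def by auto
  have bV: "b \<in> V" and aV: "a \<in> V" using ab EV by auto
  have bR: "b \<notin> R" using b by blast
  have rb: "is_root F b" using hang bV b by blast
  obtain r1 where r1: "r1 \<in> R" "(r1, a) \<in> F\<^sup>*" using a by blast
  have "(b, a) \<notin> F\<^sup>*"
  proof
    assume "(b, a) \<in> F\<^sup>*"
    then have "r1 = b" using root_unique[OF up _ rb r1(2)] R r1(1) by blast
    then show False using r1(1) bR by simp
  qed
  then have fo': "forest V (insert (a, b) F)"
    using FV up ac aV bV rb unfolding forest_def unique_parents_def is_root_def by auto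
  have mono: "F\<^sup>* \<subseteq> (insert (a, b) F)\<^sup>*" by (meson rtrancl_mono subset_insertI)
  have "(r1, b) \<in> (insert (a, b) F)\<^sup>*"
    using r1(2) mono by (meson insertI1 rtrancl.rtrancl_into_rtrancl subsetD)
  then have "is_root (insert (a, b) F) v \<or> (\<exists>r\<in>R. (r, v) \<in> (insert (a, b) F)\<^sup>*)" if "v \<in> V" for v
    using hang that mono r1(1) unfolding is_root_def by blast
  then show "partial_forest V E R (insert (a, b) F)"
    using FE ab fo' R bR unfolding partial_forest_def is_root_def by auto
  show "(a, b) \<notin> F" using rb unfolding is_root_def by auto
qed

lemma exit_arc:
  assumes "(r, x) \<in> E\<^sup>*" "r \<in> S" "x \<notin> S"
  shows "\<exists>a b. (a, b) \<in> E \<and> a \<in> S \<and> b \<notin> S"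
  using assms by (induction x rule: rtrancl_induct) auto

lemma partial_forest_grow:
  assumes fV: "finite V" and EV: "E \<subseteq> V \<times> V" and pf0: "partial_forest V E R F0"
  shows "\<exists>F. partial_forest V E R F \<and> F0 \<subseteq> F \<and>
           (\<forall>v. (\<exists>r\<in>R. (r, v) \<in> E\<^sup>*) \<longrightarrow> (\<exists>r\<in>R. (r, v) \<in> F\<^sup>*))"
proof -
  define P where "P F \<longleftrightarrow> partial_forest V E R F \<and> F0 \<subseteq> F" for F
  have fE: "finite E" using EV fV by (meson finite_SigmaI finite_subset)
  have "\<forall>F. P F \<longrightarrow> card F < Suc (card E)"
    unfolding P_def partial_forest_def using fE by (metis card_mono le_imp_less_Suc)
  then obtain F where PF: "P F" and greatest: "\<forall>F'. P F' \<longrightarrow> card F' \<le> card F"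
    using ex_has_greatest_nat[of P F0 card "Suc (card E)"] pf0 unfolding P_def by blast
  have "\<exists>r\<in>R. (r, v) \<in> F\<^sup>*" if reach: "\<exists>r\<in>R. (r, v) \<in> E\<^sup>*" for v
  proof (rule ccontr)
    assume v: "\<not> (\<exists>r\<in>R. (r, v) \<in> F\<^sup>*)"
    obtain r where "r \<in> R" "(r, v) \<in> E\<^sup>*" using reach by blast
    then obtain a b where ab: "(a, b) \<in> E" "\<exists>r\<in>R. (r, a) \<in> F\<^sup>*" "\<not> (\<exists>r\<in>R. (r, b) \<in> F\<^sup>*)"
      using v exit_arc[of r v E "{x. \<exists>r\<in>R. (r, x) \<in> F\<^sup>*}"] by blast
    have pf: "partial_forest V E R F" using PF unfolding P_def by simp
    have "P (insert (a, b) F)" using partial_forest_extend(1)[OF pf EV ab] PF unfolding P_def by auto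
    moreover have "card (insert (a, b) F) = Suc (card F)"
      using partial_forest_extend(2)[OF pf EV ab] pf fE unfolding partial_forest_def
      by (meson card_insert_disjoint finite_subset)
    ultimately show False using greatest by fastforce
  qed
  then show ?thesis using PF unfolding P_def by blast
qed

section \<open>Maximum out-forests via source families\<close>

lemma disjoint_family_meeting:
  assumes fB: "finite B" and fS: "finite S"
    and disj: "\<forall>K1\<in>B. \<forall>K2\<in>B. K1 \<inter> K2 \<noteq> {} \<longrightarrow> K1 = K2"
    and meet: "\<forall>K\<in>B. K \<inter> S \<noteq> {}"
  shows "card B \<le> card S"
    and "card B = card S \<Longrightarrow> x \<in> S \<Longrightarrow> \<exists>K\<in>B. x \<in> K"
    and "card B = card S \<Longrightarrow> K \<in> B \<Longrightarrow> x \<in> K \<inter> S \<Longrightarrow> y \<in> K \<inter> S \<Longrightarrow> x = y"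
proof -
  define c where "c K = (SOME x. x \<in> K \<inter> S)" for K
  have cK: "c K \<in> K \<inter> S" if "K \<in> B" for K
    unfolding c_def using meet that by (meson ex_in_conv someI_ex)
  have inj: "inj_on c B"
  proof (rule inj_onI)
    fix K1 K2 assume "K1 \<in> B" "K2 \<in> B" "c K1 = c K2"
    then have "c K1 \<in> K1 \<inter> K2" using cK by (metis IntE IntI)
    then show "K1 = K2" using disj \<open>K1 \<in> B\<close> \<open>K2 \<in> B\<close> by blast
  qed
  have sub: "c ` B \<subseteq> S" using cK by auto
  have cardB: "card B = card (c ` B)" using card_image[OF inj] by simp
  show "card B \<le> card S" using cardB card_mono[OF fS sub] by simp
  assume "card B = card S"
  then have img: "c ` B = S" using cardB sub fS by (metis card_subset_eq)
  show "x \<in> S \<Longrightarrow> \<exists>K\<in>B. x \<in> K" using img cK by force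
  show "x = y" if "K \<in> B" "x \<in> K \<inter> S" "y \<in> K \<inter> S"
  proof -
    have "z = c K" if z: "z \<in> K \<inter> S" for z
    proof -
      obtain K' where K': "K' \<in> B" "z = c K'" using img z by auto
      then have "z \<in> K' \<inter> K" using cK z by auto
      then have "K' = K" using disj K'(1) \<open>K \<in> B\<close> by blast
      then show ?thesis using K'(2) by simp
    qed
    then have "x = c K" "y = c K" using that(2,3) by blast+
    then show ?thesis by simp
  qed
qed

text \<open>If every forest in E has at least m roots and some forest attains m, the maximum
  out-forests are exactly the forests with m roots (by the arc count of forests).\<close>
lemma max_out_forests_min_roots:
  assumes fV: "finite V" and EV: "E \<subseteq> V \<times> V"
    and lb: "\<And>F. F \<subseteq> E \<Longrightarrow> forest V F \<Longrightarrow> m \<le> card (roots V F)"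
    and F0: "F0 \<subseteq> E" "forest V F0" "card (roots V F0) = m"
  shows "max_out_forests V E = {F. F \<subseteq> E \<and> forest V F \<and> card (roots V F) = m}"
proof -
  have arcs: "card F + card (roots V F) = card V" if "forest V F" for F
    using card_forest[OF fV that] .
  show ?thesis unfolding max_out_forests_def out_forest_iff_forest[OF fV EV]
  proof (intro set_eqI iffI; clarsimp)
    fix F assume F: "F \<subseteq> E" "forest V F" and max: "\<forall>F'. F' \<subseteq> E \<and> forest V F' \<longrightarrow> card F' \<le> card F"
    have "card F0 \<le> card F" using max F0(1,2) by blast
    then show "card (roots V F) = m" using F0(3) lb[OF F] arcs[OF F(2)] arcs[OF F0(2)] by linarith
  next
    fix F F' assume F: "forest V F" "m = card (roots V F)" and F': "F' \<subseteq> E" "forest V F'"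
    then show "card F' \<le> card F" using lb[OF F'] arcs[OF F(1)] arcs[OF F'(2)] by linarith
  qed
qed

text \<open>The basis bicomponents are the motivating
  example; the notion is also used for graphs with some arcs deleted.\<close>
locale source_family =
  fixes V :: "'a set" and E :: "('a \<times> 'a) set" and B :: "'a set set"
  assumes finite_V: "finite V" and arcs_V: "E \<subseteq> V \<times> V"
    and member_nonempty: "S \<in> B \<Longrightarrow> S \<noteq> {}"
    and member_V: "S \<in> B \<Longrightarrow> S \<subseteq> V"
    and member_closed: "S \<in> B \<Longrightarrow> (a, b) \<in> E \<Longrightarrow> b \<in> S \<Longrightarrow> a \<in> S"
    and member_connected: "S \<in> B \<Longrightarrow> x \<in> S \<Longrightarrow> y \<in> S \<Longrightarrow> (x, y) \<in> E\<^sup>*"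
    and members_disjoint: "S \<in> B \<Longrightarrow> S' \<in> B \<Longrightarrow> x \<in> S \<Longrightarrow> x \<in> S' \<Longrightarrow> S = S'"
    and covering: "v \<in> V \<Longrightarrow> \<exists>S\<in>B. \<exists>s\<in>S. (s, v) \<in> E\<^sup>*"
begin

lemma finite_B: "finite B"
  using finite_V member_V by (meson Pow_iff finite_Pow_iff finite_subset subsetI)

lemma member_closed_path: "S \<in> B \<Longrightarrow> (a, b) \<in> E\<^sup>* \<Longrightarrow> b \<in> S \<Longrightarrow> a \<in> S"
  using path_into_closed[of a b E S] member_closed by blast

text \<open>No arc of a forest in E enters a member, so each member contains a root.\<close>
lemma member_has_root:
  assumes "F \<subseteq> E" "forest V F" "S \<in> B"
  shows "S \<inter> roots V F \<noteq> {}"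
proof -
  obtain k where k: "k \<in> S" using member_nonempty[OF assms(3)] by blast
  obtain r where r: "is_root F r" "(r, k) \<in> F\<^sup>*" using root_exists[OF finite_V assms(2)] by blast
  have "(r, k) \<in> E\<^sup>*" using r(2) assms(1) rtrancl_mono by blast
  then have "r \<in> S" using member_closed_path[OF assms(3) _ k] by blast
  then show ?thesis using r(1) member_V[OF assms(3)] unfolding roots_def by auto
qed

lemma finite_roots: "finite (roots V F)"
  using finite_V unfolding roots_def by simp

lemma roots_meet_members:
  assumes "F \<subseteq> E" "forest V F"
  shows "card B \<le> card (roots V F)"
    and "card B = card (roots V F) \<Longrightarrow> x \<in> roots V F \<Longrightarrow> \<exists>S\<in>B. x \<in> S"
    and "card B = card (roots V F) \<Longrightarrow> S \<in> B \<Longrightarrow> x \<in> S \<inter> roots V F \<Longrightarrow> y \<in> S \<inter> roots V F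
      \<Longrightarrow> x = y"
proof -
  have disj: "\<forall>S1\<in>B. \<forall>S2\<in>B. S1 \<inter> S2 \<noteq> {} \<longrightarrow> S1 = S2" using members_disjoint by blast
  have meet: "\<forall>S\<in>B. S \<inter> roots V F \<noteq> {}" using member_has_root[OF assms] by blast
  note transversal = disjoint_family_meeting[OF finite_B finite_roots disj meet]
  show "card B \<le> card (roots V F)" by (rule transversal(1))
  show "card B = card (roots V F) \<Longrightarrow> x \<in> roots V F \<Longrightarrow> \<exists>S\<in>B. x \<in> S"
    by (rule transversal(2))
  show "card B = card (roots V F) \<Longrightarrow> S \<in> B \<Longrightarrow> x \<in> S \<inter> roots V F \<Longrightarrow> y \<in> S \<inter> roots V F
      \<Longrightarrow> x = y" by (rule transversal(3))
qed

lemma grown_forest_roots: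
  assumes F: "partial_forest V E R F" and reach: "\<forall>v. (\<exists>x\<in>R. (x, v) \<in> E\<^sup>*) \<longrightarrow> (\<exists>x\<in>R. (x, v) \<in> F\<^sup>*)"
    and R: "\<forall>S\<in>B. S \<inter> R \<noteq> {}"
  shows "roots V F \<subseteq> R"
proof
  fix v assume "v \<in> roots V F"
  then have vV: "v \<in> V" and rv: "is_root F v" unfolding roots_def by auto
  obtain S s where S: "S \<in> B" "s \<in> S" "(s, v) \<in> E\<^sup>*" using covering[OF vV] by blast
  obtain x where "x \<in> S \<inter> R" using R S(1) by blast
  then have "(x, v) \<in> E\<^sup>*" using member_connected S by (meson IntD1 rtrancl_trans)
  then obtain x' where "x' \<in> R" "(x', v) \<in> F\<^sup>*" using reach \<open>x \<in> S \<inter> R\<close> by blast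
  then show "v \<in> R" using reach_root[OF rv] by blast
qed

text \<open>Growing a forest from r alone and then from one representative per member gives a
  forest with exactly |B| roots, in which r reaches everything reachable from it.  The
  representatives stay roots after the first phase since no member is reachable from r
  except the one containing r.\<close>
lemma forest_with_min_roots:
  assumes S0: "S0 \<in> B" and r: "r \<in> S0"
  shows "\<exists>F. F \<subseteq> E \<and> forest V F \<and> card (roots V F) = card B \<and> is_root F r \<and>
             (\<forall>v. (r, v) \<in> E\<^sup>* \<longrightarrow> (r, v) \<in> F\<^sup>*)"
proof -
  obtain F1 where F1: "partial_forest V E {r} F1" "\<forall>v. (r, v) \<in> E\<^sup>* \<longrightarrow> (r, v) \<in> F1\<^sup>*"
    using partial_forest_grow[OF finite_V arcs_V partial_forest_empty[of V E "{r}"]] by auto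
  have F1E: "F1 \<subseteq> E" using F1(1) unfolding partial_forest_def by simp
  define c where "c S = (if r \<in> S then r else SOME x. x \<in> S)" for S
  have cS: "c S \<in> S" if "S \<in> B" for S
    using member_nonempty[OF that] unfolding c_def by (auto intro: someI)
  define R where "R = c ` B"
  have rR: "r \<in> R" using S0 r unfolding R_def c_def by force
  have "is_root F1 (c S)" if S: "S \<in> B" for S
  proof (rule ccontr)
    assume not_root: "\<not> is_root F1 (c S)"
    then have "(r, c S) \<in> F1\<^sup>*" using F1(1) member_V[OF S] cS[OF S] unfolding partial_forest_def by auto
    then have "(r, c S) \<in> E\<^sup>*" using F1E rtrancl_mono by blast
    then have "r \<in> S" using member_closed_path[OF S] cS[OF S] by blast
    then show False using not_root F1(1) unfolding c_def partial_forest_def by simp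
  qed
  then have "\<forall>x\<in>R. is_root F1 x" unfolding R_def by blast
  then have "partial_forest V E R F1" using F1(1) rR unfolding partial_forest_def by blast
  then obtain F2 where F2: "partial_forest V E R F2" "F1 \<subseteq> F2"
      "\<forall>v. (\<exists>x\<in>R. (x, v) \<in> E\<^sup>*) \<longrightarrow> (\<exists>x\<in>R. (x, v) \<in> F2\<^sup>*)"
    using partial_forest_grow[OF finite_V arcs_V] by blast
  have F2E: "F2 \<subseteq> E" and fo: "forest V F2" using F2(1) unfolding partial_forest_def by auto
  have "roots V F2 \<subseteq> R" using grown_forest_roots[OF F2(1,3)] cS unfolding R_def by blast
  then have "card (roots V F2) \<le> card B"
    unfolding R_def using finite_B by (meson card_image_le card_mono finite_imageI le_trans)
  then have "card (roots V F2) = card B" using roots_meet_members(1)[OF F2E fo] by simp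
  moreover have "is_root F2 r" using F2(1) rR unfolding partial_forest_def by blast
  moreover have "(r, v) \<in> F2\<^sup>*" if "(r, v) \<in> E\<^sup>*" for v
    using F1(2) F2(2) that rtrancl_mono by blast
  ultimately show ?thesis using F2E fo by blast
qed

lemma min_root_forest_exists: "\<exists>F. F \<subseteq> E \<and> forest V F \<and> card (roots V F) = card B"
proof (cases "B = {}")
  case True
  then have "V = {}" using covering by (meson bex_empty equals0I)
  then show ?thesis using True forest_empty unfolding roots_def by fastforce
next
  case False
  then obtain S0 r where "S0 \<in> B" "r \<in> S0" using member_nonempty by blast
  then show ?thesis using forest_with_min_roots by meson
qed

lemma max_out_forests_eq:
  "max_out_forests V E = {F. F \<subseteq> E \<and> forest V F \<and> card (roots V F) = card B}"
proof -
  obtain F0 where F0: "F0 \<subseteq> E" "forest V F0" "card (roots V F0) = card B"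
    using min_root_forest_exists by blast
  show ?thesis by (rule max_out_forests_min_roots[OF finite_V arcs_V _ F0]) (rule roots_meet_members(1))
qed

lemma max_out_forests_nonempty: "max_out_forests V E \<noteq> {}"
  using min_root_forest_exists unfolding max_out_forests_eq by blast

lemma max_out_forests_arcs:
  "F \<in> max_out_forests V E \<longleftrightarrow> F \<subseteq> E \<and> forest V F \<and> card F + card B = card V"
  unfolding max_out_forests_eq using card_forest[OF finite_V, of F] by auto

lemma max_out_forest_root_in_member:
  assumes "F \<in> max_out_forests V E" "x \<in> roots V F"
  shows "\<exists>S\<in>B. x \<in> S"
  using assms roots_meet_members(2)[of F] unfolding max_out_forests_eq by auto

lemma max_out_forest_root_unique:
  assumes "F \<in> max_out_forests V E" "S \<in> B" "x \<in> S" "y \<in> S" "is_root F x" "is_root F y"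
  shows "x = y"
proof -
  have "x \<in> S \<inter> roots V F" "y \<in> S \<inter> roots V F"
    using assms member_V[OF assms(2)] unfolding roots_def by auto
  then show ?thesis using assms(1,2) roots_meet_members(3)[of F] unfolding max_out_forests_eq by auto
qed

end

lemma set_weight_union_product:
  assumes fA: "finite A" and fB: "finite B"
    and A: "\<forall>T\<in>A. finite T \<and> T \<subseteq> X" and B: "\<forall>G\<in>B. finite G \<and> G \<inter> X = {}"
  shows "set_weight w ((\<lambda>(T, G). T \<union> G) ` (A \<times> B)) = set_weight w A * set_weight w B"
proof -
  have inj: "inj_on (\<lambda>(T, G). T \<union> G) (A \<times> B)"
  proof (rule inj_onI, clarify)
    fix T G T' G' assume mem: "T \<in> A" "G \<in> B" "T' \<in> A" "G' \<in> B" and eq: "T \<union> G = T' \<union> G'"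
    from mem have "T = (T \<union> G) \<inter> X" "T' = (T' \<union> G') \<inter> X" "G = (T \<union> G) - X" "G' = (T' \<union> G') - X"
      using A B by auto
    then show "T = T' \<and> G = G'" using eq by metis
  qed
  have mult: "sg_weight w (T \<union> G) = sg_weight w T * sg_weight w G" if "T \<in> A" "G \<in> B" for T G
    unfolding sg_weight_def using A B that by (intro prod.union_disjoint) auto
  have "set_weight w ((\<lambda>(T, G). T \<union> G) ` (A \<times> B)) = (\<Sum>(T, G)\<in>A \<times> B. sg_weight w (T \<union> G))"
    unfolding set_weight_def sum.reindex[OF inj] by (intro sum.cong) auto
  also have "\<dots> = (\<Sum>T\<in>A. \<Sum>G\<in>B. sg_weight w T * sg_weight w G)"
    by (simp add: sum.cartesian_product[symmetric] mult cong: sum.cong)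
  also have "\<dots> = set_weight w A * set_weight w B"
    unfolding set_weight_def by (simp add: sum_product)
  finally show ?thesis .
qed

locale finite_digraph =
  fixes V :: "'a set" and E :: "('a \<times> 'a) set"
  assumes finite_V: "finite V" and arcs_V: "E \<subseteq> V \<times> V"
begin

lemma finite_E: "finite E"
  using finite_V arcs_V by (meson finite_SigmaI finite_subset)

sublocale bb: source_family V E "basis_bicomps V E"
proof
  show "finite V" "E \<subseteq> V \<times> V" by (fact finite_V arcs_V)+
  fix S S' a b x y v
  show "S \<noteq> {}" if "S \<in> basis_bicomps V E" using that basis_bicomp_nonempty by simp
  show "S \<subseteq> V" if "S \<in> basis_bicomps V E" using that basis_bicomp_subset by simp
  show "a \<in> S" if "S \<in> basis_bicomps V E" "(a, b) \<in> E" "b \<in> S"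
    using that basis_bicomp_closed by simp
  show "(x, y) \<in> E\<^sup>*" if "S \<in> basis_bicomps V E" "x \<in> S" "y \<in> S"
    using that basis_bicomp_connected by simp
  show "S = S'" if "S \<in> basis_bicomps V E" "S' \<in> basis_bicomps V E" "x \<in> S" "x \<in> S'"
    using that basis_bicomp_disjoint by simp
  show "\<exists>S\<in>basis_bicomps V E. \<exists>s\<in>S. (s, v) \<in> E\<^sup>*" if "v \<in> V"
    using reachable_from_basis_bicomp[OF finite_V arcs_V that] by auto
qed

abbreviation outside_arcs :: "'a set \<Rightarrow> ('a \<times> 'a) set" where
  "outside_arcs K \<equiv> E - E \<inter> K \<times> K"

text \<open>The family of the reduced graph Gamma_{-K}: the vertices of K become isolated sources,
  the other basis bicomponents are unaffected.\<close>
definition reduced_family :: "'a set \<Rightarrow> 'a set set" where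
  "reduced_family K = (\<lambda>k. {k}) ` K \<union> (basis_bicomps V E - {K})"

text \<open>The reduced family is a source family of Gamma_{-K}: arcs inside other basis
  bicomponents survive, no arc enters K, and paths from K are cut at their last vertex in K.\<close>
lemma reduced_source_family:
  assumes K: "basis_bicomp V E K"
  shows "source_family V (outside_arcs K) (reduced_family K)"
proof
  show "finite V" "outside_arcs K \<subseteq> V \<times> V" using finite_V arcs_V by auto
  fix S S' a b x y v
  have singleton: "\<exists>k\<in>K. S = {k}" if "S \<in> reduced_family K" "S \<notin> basis_bicomps V E - {K}" for S
    using that unfolding reduced_family_def by auto
  show "S \<noteq> {}" if "S \<in> reduced_family K"
    using that basis_bicomp_nonempty unfolding reduced_family_def by auto
  show "S \<subseteq> V" if "S \<in> reduced_family K"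
    using that basis_bicomp_subset basis_bicomp_subset[OF K] unfolding reduced_family_def by auto
  show "a \<in> S" if S: "S \<in> reduced_family K" and ab: "(a, b) \<in> outside_arcs K" "b \<in> S"
  proof (cases "S \<in> basis_bicomps V E - {K}")
    case True then show ?thesis using ab basis_bicomp_closed[of V E S a b] by auto
  next
    case False then show ?thesis using singleton[OF S] ab basis_bicomp_closed[OF K] by auto
  qed
  show "(x, y) \<in> (outside_arcs K)\<^sup>*" if S: "S \<in> reduced_family K" and xy: "x \<in> S" "y \<in> S"
  proof (cases "S \<in> basis_bicomps V E - {K}")
    case True
    then have bbS: "basis_bicomp V E S" and "S \<noteq> K" by auto
    have "(x, y) \<in> (E \<inter> S \<times> S)\<^sup>*"
      using path_into_closed[of x y E S] basis_bicomp_connected[OF bbS xy]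
        basis_bicomp_closed[OF bbS] xy by blast
    moreover have "E \<inter> S \<times> S \<subseteq> outside_arcs K"
      using basis_bicomp_disjoint[OF bbS K] \<open>S \<noteq> K\<close> by blast
    ultimately show ?thesis using rtrancl_mono by blast
  next
    case False then show ?thesis using singleton[OF S] xy by auto
  qed
  show "S = S'" if S: "S \<in> reduced_family K" "S' \<in> reduced_family K" and x: "x \<in> S" "x \<in> S'"
  proof (cases "S \<in> basis_bicomps V E - {K}"; cases "S' \<in> basis_bicomps V E - {K}")
    assume "S \<in> basis_bicomps V E - {K}" "S' \<in> basis_bicomps V E - {K}"
    then show ?thesis using basis_bicomp_disjoint[of V E S S' x] x by auto
  next
    assume "S \<in> basis_bicomps V E - {K}" "S' \<notin> basis_bicomps V E - {K}"
    then show ?thesis using singleton[OF S(2)] basis_bicomp_disjoint[OF _ K] x by auto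
  next
    assume "S \<notin> basis_bicomps V E - {K}" "S' \<in> basis_bicomps V E - {K}"
    then show ?thesis using singleton[OF S(1)] basis_bicomp_disjoint[OF _ K] x by auto
  next
    assume "S \<notin> basis_bicomps V E - {K}" "S' \<notin> basis_bicomps V E - {K}"
    then show ?thesis using singleton[OF S(1)] singleton[OF S(2)] x by auto
  qed
  show "\<exists>S\<in>reduced_family K. \<exists>s\<in>S. (s, v) \<in> (outside_arcs K)\<^sup>*" if "v \<in> V"
  proof -
    obtain K0 k0 where K0: "basis_bicomp V E K0" "k0 \<in> K0" "(k0, v) \<in> E\<^sup>*"
      using reachable_from_basis_bicomp[OF finite_V arcs_V \<open>v \<in> V\<close>] by blast
    show ?thesis
      using path_outside[OF K0(3), of K] K0(1,2) unfolding reduced_family_def by (cases "K0 = K") auto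
  qed
qed

lemma card_reduced_family:
  assumes K: "basis_bicomp V E K"
  shows "card (reduced_family K) = card K + (card (basis_bicomps V E) - 1)"
proof -
  have "finite K" using basis_bicomp_subset[OF K] finite_V by (rule finite_subset)
  have "(\<lambda>k. {k}) ` K \<inter> (basis_bicomps V E - {K}) = {}"
    using basis_bicomp_disjoint[OF K] by fastforce
  then have "card (reduced_family K) = card ((\<lambda>k. {k}) ` K) + card (basis_bicomps V E - {K})"
    unfolding reduced_family_def using \<open>finite K\<close> bb.finite_B by (simp add: card_Un_disjoint)
  moreover have "card ((\<lambda>k. {k}) ` K) = card K" by (rule card_image) (simp add: inj_on_def)
  moreover have "card (basis_bicomps V E - {K}) = card (basis_bicomps V E) - 1"
    using K bb.finite_B by simp
  ultimately show ?thesis by simp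
qed

section \<open>Splitting maximum out-forests at a basis bicomponent\<close>

lemma reduced_max_out_forests_card:
  assumes K: "basis_bicomp V E K"
  shows "G \<in> max_out_forests V (outside_arcs K) \<longleftrightarrow>
    G \<subseteq> outside_arcs K \<and> forest V G \<and> card G + card K + card (basis_bicomps V E) = Suc (card V)"
proof -
  have "card (basis_bicomps V E) \<ge> 1"
    using K bb.finite_B by (metis One_nat_def Suc_leI card_gt_0_iff empty_iff mem_Collect_eq)
  then show ?thesis
    using source_family.max_out_forests_arcs[OF reduced_source_family[OF K]] card_reduced_family[OF K]
    by auto
qed

text \<open>No arc of the reduced graph enters K, so all of K are roots.\<close>
lemma outside_arcs_root:
  assumes "basis_bicomp V E K" "G \<subseteq> outside_arcs K" "k \<in> K"
  shows "is_root G k"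
  using assms basis_bicomp_closed[OF assms(1)] unfolding is_root_def by blast

lemma trees_K_atD:
  assumes "T \<in> trees_K_at E K j"
  shows "T \<subseteq> E \<inter> K \<times> K" "unique_parents T" "is_root T j" "\<forall>v\<in>K. (j, v) \<in> T\<^sup>*" "j \<in> K"
    "card T + 1 = card K"
proof -
  show "T \<subseteq> E \<inter> K \<times> K" "unique_parents T" "is_root T j" "\<forall>v\<in>K. (j, v) \<in> T\<^sup>*" "j \<in> K"
    using assms diverging_tree_atD[of K T j] unfolding trees_K_at_def diverging_tree_at_def by auto
  have "card K > 0" "card T = card K - 1"
    using assms card_gt_0_iff unfolding trees_K_at_def diverging_tree_at_def by auto
  then show "card T + 1 = card K" by simp
qed

lemma tree_union_max_out_forest:
  assumes K: "basis_bicomp V E K" and T: "T \<in> trees_K_at E K j"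
    and G: "G \<in> max_out_forests V (outside_arcs K)"
  shows "T \<union> G \<in> max_out_forests V E" and "is_root (T \<union> G) j"
proof -
  note tree = trees_K_atD[OF T]
  have GE: "G \<subseteq> outside_arcs K" and foG: "forest V G"
    and cardG: "card G + card K + card (basis_bicomps V E) = Suc (card V)"
    using G reduced_max_out_forests_card[OF K] by auto
  have G_out: "\<forall>(a, b)\<in>G. b \<notin> K" using outside_arcs_root[OF K GE] unfolding is_root_def by blast
  note glued = forest_glue_tree[OF finite_V basis_bicomp_subset[OF K] _ tree(2,3,4,5) foG G_out]
  show "is_root (T \<union> G) j" using glued(2) tree(1) by blast
  have "card (T \<union> G) = card T + card G"
  proof (rule card_Un_disjoint)
    show "finite T" "finite G" using tree(1) GE finite_E by (auto intro: finite_subset)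
    show "T \<inter> G = {}" using tree(1) GE by auto
  qed
  then have "card (T \<union> G) + card (basis_bicomps V E) = card V" using tree(6) cardG by simp
  moreover have "T \<union> G \<subseteq> E" using tree(1) GE by auto
  ultimately show "T \<union> G \<in> max_out_forests V E"
    using glued(1) tree(1) bb.max_out_forests_arcs by blast
qed

lemma max_out_forest_split:
  assumes K: "basis_bicomp V E K" and j: "j \<in> K"
    and F: "F \<in> max_out_forests V E" and root_j: "is_root F j"
  shows "F \<inter> K \<times> K \<in> trees_K_at E K j" and "F - K \<times> K \<in> max_out_forests V (outside_arcs K)"
proof -
  have FE: "F \<subseteq> E" and foF: "forest V F" and cardF: "card F + card (basis_bicomps V E) = card V"
    using F bb.max_out_forests_arcs by auto
  have up: "unique_parents F" using foF unfolding forest_def by auto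
  have closed: "x \<in> K" if "(x, y) \<in> F" "y \<in> K" for x y
    using basis_bicomp_closed[OF K] that FE by blast
  have "diverging_tree_at K (F \<inter> K \<times> K) j"
  proof (rule diverging_tree_atI)
    show "finite K" using basis_bicomp_subset[OF K] finite_V by (rule finite_subset)
    show "unique_parents (F \<inter> K \<times> K)" using up unfolding unique_parents_def by auto
    show "is_root (F \<inter> K \<times> K) j" using root_j unfolding is_root_def by auto
    show "\<forall>v\<in>K. (j, v) \<in> (F \<inter> K \<times> K)\<^sup>*"
    proof
      fix v assume v: "v \<in> K"
      obtain r where r: "is_root F r" "(r, v) \<in> F\<^sup>*" using root_exists[OF finite_V foF] by blast
      have "r \<in> K" "(r, v) \<in> (F \<inter> K \<times> K)\<^sup>*" using path_into_closed[of r v F K] r(2) v closed by metis+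
      moreover have "r = j" using bb.max_out_forest_root_unique[OF F _ \<open>r \<in> K\<close> j r(1) root_j] K by simp
      ultimately show "(j, v) \<in> (F \<inter> K \<times> K)\<^sup>*" by simp
    qed
  qed (use j in auto)
  then show tree: "F \<inter> K \<times> K \<in> trees_K_at E K j" unfolding trees_K_at_def using FE by auto
  have "finite F" using FE finite_E by (rule finite_subset)
  then have "card F = card (F \<inter> K \<times> K) + card (F - K \<times> K)"
    by (metis Int_Diff_Un Int_Diff_disjoint card_Un_disjoint finite_Diff finite_Int)
  then have "card (F - K \<times> K) + card K + card (basis_bicomps V E) = Suc (card V)"
    using cardF trees_K_atD(6)[OF tree] by simp
  moreover have "forest V (F - K \<times> K)" using forest_subset[OF foF] by blast
  ultimately show "F - K \<times> K \<in> max_out_forests V (outside_arcs K)"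
    using reduced_max_out_forests_card[OF K] FE by auto
qed

definition rooted_forests :: "'a \<Rightarrow> 'a \<Rightarrow> ('a \<times> 'a) set set" where
  "rooted_forests i j = {F \<in> max_out_forests V E. is_root F j \<and> (j, i) \<in> F\<^sup>*}"

lemma rooted_forests_decompose:
  assumes K: "basis_bicomp V E K" and j: "j \<in> K"
  shows "rooted_forests i j = (\<lambda>(T, G). T \<union> G) ` (trees_K_at E K j \<times> P_K_to V E K i)"
proof (intro equalityI subsetI)
  fix F assume "F \<in> rooted_forests i j"
  then have F: "F \<in> max_out_forests V E" and root_j: "is_root F j" and ji: "(j, i) \<in> F\<^sup>*"
    unfolding rooted_forests_def by auto
  have "F - F \<inter> K \<times> K = F - K \<times> K" by blast
  then have "\<exists>k\<in>K. (k, i) \<in> (F - K \<times> K)\<^sup>*" using path_outside[OF ji, of K] j by auto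
  then have "(F \<inter> K \<times> K, F - K \<times> K) \<in> trees_K_at E K j \<times> P_K_to V E K i"
    using max_out_forest_split[OF K j F root_j] unfolding P_K_to_def by auto
  then show "F \<in> (\<lambda>(T, G). T \<union> G) ` (trees_K_at E K j \<times> P_K_to V E K i)"
    by (rule image_eqI[rotated]) auto
next
  fix F assume "F \<in> (\<lambda>(T, G). T \<union> G) ` (trees_K_at E K j \<times> P_K_to V E K i)"
  then obtain T G where T: "T \<in> trees_K_at E K j" and G: "G \<in> P_K_to V E K i" and F: "F = T \<union> G"
    by auto
  obtain k where k: "k \<in> K" "(k, i) \<in> G\<^sup>*" using G unfolding P_K_to_def by auto
  have "(j, k) \<in> F\<^sup>*" using trees_K_atD(4)[OF T] k(1) F rtrancl_mono by blast
  moreover have "(k, i) \<in> F\<^sup>*" using k(2) F rtrancl_mono by blast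
  ultimately have "(j, i) \<in> F\<^sup>*" by (rule rtrancl_trans)
  then show "F \<in> rooted_forests i j"
    using tree_union_max_out_forest[OF K T] G F unfolding P_K_to_def rooted_forests_def by auto
qed

section \<open>The product formula for Jbar\<close>

lemma finite_trees_K_at: "finite (trees_K_at E K j)"
proof -
  have "trees_K_at E K j \<subseteq> Pow E" unfolding trees_K_at_def by auto
  then show ?thesis using finite_E by (meson finite_Pow_iff finite_subset)
qed

text \<open>A spanning tree of K has exactly one root, so the trees split by their root.\<close>
lemma trees_K_weight:
  assumes K: "basis_bicomp V E K"
  shows "set_weight w (trees_K E K) = (\<Sum>k\<in>K. set_weight w (trees_K_at E K k))"
proof -
  have "finite K" using basis_bicomp_subset[OF K] finite_V by (rule finite_subset)
  have eq: "trees_K E K = (\<Union>k\<in>K. trees_K_at E K k)"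
    unfolding trees_K_def trees_K_at_def diverging_tree_def diverging_tree_at_def by auto
  have disj: "trees_K_at E K k1 \<inter> trees_K_at E K k2 = {}" if "k1 \<noteq> k2" for k1 k2
  proof (rule ccontr)
    assume "trees_K_at E K k1 \<inter> trees_K_at E K k2 \<noteq> {}"
    then obtain T where T1: "T \<in> trees_K_at E K k1" and T2: "T \<in> trees_K_at E K k2" by blast
    have "(k1, k2) \<in> T\<^sup>*" using trees_K_atD(4)[OF T1] trees_K_atD(5)[OF T2] by blast
    then show False using reach_root[OF trees_K_atD(3)[OF T2]] that by blast
  qed
  show ?thesis unfolding eq set_weight_def
    by (rule sum.UNION_disjoint) (use \<open>finite K\<close> finite_trees_K_at disj in auto)
qed

lemma Jbar_eq:
  assumes "i \<in> V"
  shows "Jbar V E w i j = set_weight w (rooted_forests i j) / sigma_max V E w"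
proof -
  have "{F \<in> max_out_forests V E. in_tree_rooted V F i j} = rooted_forests i j"
    using in_tree_rooted_iff[OF finite_V _ assms] bb.max_out_forests_arcs
    unfolding rooted_forests_def by blast
  then show ?thesis unfolding Jbar_def by simp
qed

lemma P_K_to_self: "j \<in> K \<Longrightarrow> P_K_to V E K j = max_out_forests V (outside_arcs K)"
  unfolding P_K_to_def by blast

lemma Jbar_product:
  assumes K: "basis_bicomp V E K" and j: "j \<in> K" and i: "i \<in> V"
  shows "Jbar V E w i j = set_weight w (trees_K_at E K j) * set_weight w (P_K_to V E K i) / sigma_max V E w"
proof -
  have "P_K_to V E K i \<subseteq> max_out_forests V (outside_arcs K)" unfolding P_K_to_def by blast
  moreover have "finite (max_out_forests V (outside_arcs K))"
    using finite_E by (intro finite_max_out_forests) simp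
  ultimately have fP: "finite (P_K_to V E K i)" by (rule finite_subset)
  have "\<forall>G\<in>P_K_to V E K i. finite G \<and> G \<inter> K \<times> K = {}"
    unfolding P_K_to_def source_family.max_out_forests_eq[OF reduced_source_family[OF K]]
    using finite_E by (auto intro: finite_subset)
  moreover have "\<forall>T\<in>trees_K_at E K j. finite T \<and> T \<subseteq> K \<times> K"
    using finite_E unfolding trees_K_at_def by (auto intro: finite_subset)
  ultimately show ?thesis
    unfolding Jbar_eq[OF i] rooted_forests_decompose[OF K j]
    using set_weight_union_product[OF finite_trees_K_at[of K j] fP, of "K \<times> K" w] by simp
qed

lemma rooted_forests_nonempty_iff:
  assumes i: "i \<in> V"
  shows "rooted_forests i j \<noteq> {} \<longleftrightarrow> j \<in> K_tilde V E \<and> (j, i) \<in> E\<^sup>*"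
proof
  assume "rooted_forests i j \<noteq> {}"
  then obtain F where F: "F \<in> max_out_forests V E" "is_root F j" "(j, i) \<in> F\<^sup>*"
    unfolding rooted_forests_def by blast
  have FE: "F \<subseteq> E" using F(1) bb.max_out_forests_arcs by blast
  have "j \<in> V" using path_into_closed[of j i F V] F(3) i FE arcs_V by blast
  then have "\<exists>K\<in>basis_bicomps V E. j \<in> K"
    using bb.max_out_forest_root_in_member[OF F(1)] F(2) unfolding roots_def by blast
  moreover have "(j, i) \<in> E\<^sup>*" using F(3) FE rtrancl_mono by blast
  ultimately show "j \<in> K_tilde V E \<and> (j, i) \<in> E\<^sup>*" unfolding K_tilde_def by blast
next
  assume "j \<in> K_tilde V E \<and> (j, i) \<in> E\<^sup>*"
  then obtain K where "basis_bicomp V E K" "j \<in> K" "(j, i) \<in> E\<^sup>*" unfolding K_tilde_def by blast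
  then obtain F where "F \<subseteq> E" "forest V F" "card (roots V F) = card (basis_bicomps V E)"
      "is_root F j" "(j, i) \<in> F\<^sup>*"
    using bb.forest_with_min_roots[of K j] by auto
  then show "rooted_forests i j \<noteq> {}" unfolding rooted_forests_def bb.max_out_forests_eq by blast
qed

text \<open>For i in K^+, every maximum out-forest of the reduced graph reaches i from K: the root
  above i lies in a member of the reduced family, and members other than singletons of K
  cannot reach i.\<close>
lemma P_K_to_K_plus:
  assumes K: "basis_bicomp V E K" and i: "i \<in> K_plus V E K"
  shows "P_K_to V E K i = max_out_forests V (outside_arcs K)"
proof -
  interpret red: source_family V "outside_arcs K" "reduced_family K"
    by (rule reduced_source_family[OF K])
  have iV: "i \<in> V" using i unfolding K_plus_def by auto
  have "\<exists>k\<in>K. (k, i) \<in> G\<^sup>*" if G: "G \<in> max_out_forests V (outside_arcs K)" for G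
  proof -
    have GE: "G \<subseteq> outside_arcs K" and fo: "forest V G" using G red.max_out_forests_eq by auto
    obtain r where r: "is_root G r" "(r, i) \<in> G\<^sup>*" using root_exists[OF finite_V fo] by blast
    have "r \<in> V" using path_into_closed[of r i G V] r(2) iV GE arcs_V by blast
    then obtain S where S: "S \<in> reduced_family K" "r \<in> S"
      using red.max_out_forest_root_in_member[OF G] r(1) unfolding roots_def by blast
    have "(r, i) \<in> E\<^sup>*" using r(2) GE rtrancl_mono by blast
    then have "\<not> (basis_bicomp V E S \<and> S \<noteq> K)" using i S(2) unfolding K_plus_def by blast
    then have "r \<in> K" using S unfolding reduced_family_def by auto
    then show ?thesis using r(2) by blast
  qed
  then show ?thesis unfolding P_K_to_def by blast
qed

end

locale weighted_digraph = finite_digraph +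
  fixes w :: "'a \<times> 'a \<Rightarrow> real"
  assumes weights_pos: "\<forall>a\<in>E. w a > 0"
begin

lemma sg_weight_pos: "F \<subseteq> E \<Longrightarrow> sg_weight w F > 0"
  unfolding sg_weight_def using weights_pos by (intro prod_pos) blast

lemma set_weight_nonneg: "\<forall>F\<in>S. F \<subseteq> E \<Longrightarrow> set_weight w S \<ge> 0"
  unfolding set_weight_def using sg_weight_pos by (intro sum_nonneg) (simp add: less_imp_le)

lemma set_weight_pos: "finite S \<Longrightarrow> S \<noteq> {} \<Longrightarrow> \<forall>F\<in>S. F \<subseteq> E \<Longrightarrow> set_weight w S > 0"
  unfolding set_weight_def using sg_weight_pos by (intro sum_pos) auto

lemma rooted_forests_sub: "\<forall>F\<in>rooted_forests i j. F \<subseteq> E"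
  unfolding rooted_forests_def using bb.max_out_forests_arcs by blast

lemma sigma_pos: "sigma_max V E w > 0"
  unfolding sigma_max_def
  using set_weight_pos[OF finite_max_out_forests[OF finite_E] bb.max_out_forests_nonempty]
    bb.max_out_forests_arcs
  by blast

lemma Jbar_nonneg: "i \<in> V \<Longrightarrow> Jbar V E w i j \<ge> 0"
  unfolding Jbar_eq using set_weight_nonneg[OF rooted_forests_sub] sigma_pos by simp

lemma Jbar_nonzero_iff:
  assumes i: "i \<in> V"
  shows "Jbar V E w i j \<noteq> 0 \<longleftrightarrow> j \<in> K_tilde V E \<and> (j, i) \<in> E\<^sup>*"
proof -
  have "finite (rooted_forests i j)"
    using finite_max_out_forests[OF finite_E] unfolding rooted_forests_def by simp
  then have "set_weight w (rooted_forests i j) \<noteq> 0 \<longleftrightarrow> rooted_forests i j \<noteq> {}"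
    using set_weight_pos[OF _ _ rooted_forests_sub] unfolding set_weight_def by fastforce
  then show ?thesis unfolding Jbar_eq[OF i] rooted_forests_nonempty_iff[OF i] using sigma_pos by simp
qed

text \<open>Part (1): rows sum to one, since in every maximum out-forest exactly one root lies
  above i.\<close>
lemma Jbar_row_sum:
  assumes i: "i \<in> V"
  shows "(\<Sum>k\<in>V. Jbar V E w i k) = 1"
proof -
  have unique_root: "\<exists>r\<in>V. \<forall>k. (is_root F k \<and> (k, i) \<in> F\<^sup>*) \<longleftrightarrow> k = r"
    if F: "F \<in> max_out_forests V E" for F
  proof -
    have FV: "F \<subseteq> V \<times> V" and fo: "forest V F" using F bb.max_out_forests_arcs arcs_V by auto
    obtain r where r: "is_root F r" "(r, i) \<in> F\<^sup>*" using root_exists[OF finite_V fo] by blast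
    have "r \<in> V" using path_into_closed[of r i F V] r(2) i FV by blast
    moreover have "(is_root F k \<and> (k, i) \<in> F\<^sup>*) \<longleftrightarrow> k = r" for k
      using root_unique[of F k r i] r fo unfolding forest_def by auto
    ultimately show ?thesis by blast
  qed
  have "(\<Sum>k\<in>V. set_weight w (rooted_forests i k))
      = (\<Sum>k\<in>V. \<Sum>F\<in>max_out_forests V E. if is_root F k \<and> (k, i) \<in> F\<^sup>* then sg_weight w F else 0)"
    unfolding set_weight_def rooted_forests_def
    by (simp add: sum.inter_filter[OF finite_max_out_forests[OF finite_E]])
  also have "\<dots> = (\<Sum>F\<in>max_out_forests V E. \<Sum>k\<in>V. if is_root F k \<and> (k, i) \<in> F\<^sup>* then sg_weight w F else 0)"
    by (rule sum.swap)
  also have "\<dots> = (\<Sum>F\<in>max_out_forests V E. sg_weight w F)"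
  proof (rule sum.cong[OF refl])
    fix F assume "F \<in> max_out_forests V E"
    then obtain r where "r \<in> V" "\<forall>k. (is_root F k \<and> (k, i) \<in> F\<^sup>*) \<longleftrightarrow> k = r"
      using unique_root by blast
    then show "(\<Sum>k\<in>V. if is_root F k \<and> (k, i) \<in> F\<^sup>* then sg_weight w F else 0) = sg_weight w F"
      using finite_V by simp
  qed
  finally have "(\<Sum>k\<in>V. set_weight w (rooted_forests i k)) = sigma_max V E w"
    unfolding sigma_max_def set_weight_def .
  then show ?thesis unfolding Jbar_eq[OF i] using sigma_pos by (simp add: sum_divide_distrib[symmetric])
qed

text \<open>Evaluating the row sum of a vertex of K with the product formula splits sigma.\<close>
lemma sigma_split:
  assumes K: "basis_bicomp V E K"
  shows "sigma_max V E w = set_weight w (trees_K E K) * set_weight w (max_out_forests V (outside_arcs K))"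
proof -
  obtain j where j: "j \<in> K" using basis_bicomp_nonempty[OF K] by blast
  have KV: "K \<subseteq> V" using basis_bicomp_subset[OF K] .
  then have jV: "j \<in> V" using j by auto
  have zero: "Jbar V E w j k = 0" if "k \<in> V - K" for k
  proof (rule ccontr)
    assume "Jbar V E w j k \<noteq> 0"
    then have "(k, j) \<in> E\<^sup>*" using Jbar_nonzero_iff[OF jV] by blast
    then have "k \<in> K" using path_into_closed[of k j E K] j basis_bicomp_closed[OF K] by blast
    then show False using that by simp
  qed
  have "1 = (\<Sum>k\<in>V. Jbar V E w j k)" using Jbar_row_sum[OF jV] by simp
  also have "\<dots> = (\<Sum>k\<in>K. Jbar V E w j k)"
    by (rule sum.mono_neutral_right[OF finite_V KV]) (use zero in blast)
  also have "\<dots> = (\<Sum>k\<in>K. set_weight w (trees_K_at E K k) *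
      set_weight w (max_out_forests V (outside_arcs K)) / sigma_max V E w)"
    using Jbar_product[OF K _ jV] P_K_to_self[OF j] by simp
  also have "\<dots> = set_weight w (trees_K E K) * set_weight w (max_out_forests V (outside_arcs K)) /
      sigma_max V E w"
    unfolding trees_K_weight[OF K] by (simp add: sum_divide_distrib[symmetric] sum_distrib_right)
  finally show ?thesis using sigma_pos by (simp add: field_simps)
qed

lemma Jbar_diag:
  assumes K: "basis_bicomp V E K" and j: "j \<in> K"
  shows "Jbar V E w j j = set_weight w (trees_K_at E K j) / set_weight w (trees_K E K)"
proof -
  have "j \<in> V" using j basis_bicomp_subset[OF K] by auto
  moreover have "set_weight w (max_out_forests V (outside_arcs K)) \<noteq> 0"
    using sigma_split[OF K] sigma_pos by auto
  ultimately show ?thesis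
    using Jbar_product[OF K j] P_K_to_self[OF j] sigma_split[OF K] by simp
qed

lemma Jbar_K_plus:
  assumes K: "basis_bicomp V E K" and j: "j \<in> K" and i: "i \<in> K_plus V E K"
  shows "Jbar V E w i j = Jbar V E w j j"
proof -
  have "i \<in> V" "j \<in> V" using i j basis_bicomp_subset[OF K] unfolding K_plus_def by auto
  then show ?thesis
    using Jbar_product[OF K j] P_K_to_K_plus[OF K i] P_K_to_self[OF j] by simp
qed

lemma Jbar_diag_sum:
  assumes K: "basis_bicomp V E K"
  shows "(\<Sum>j\<in>K. Jbar V E w j j) = 1"
proof -
  have "set_weight w (trees_K E K) \<noteq> 0" using sigma_split[OF K] sigma_pos by auto
  then show ?thesis
    using Jbar_diag[OF K] trees_K_weight[OF K] by (simp add: sum_divide_distrib[symmetric])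
qed

lemma Jbar_column_ratio:
  assumes K: "basis_bicomp V E K" and j1: "j1 \<in> K" and j2: "j2 \<in> K" and i: "i \<in> V"
  shows "Jbar V E w i j2 =
    set_weight w (trees_K_at E K j2) / set_weight w (trees_K_at E K j1) * Jbar V E w i j1"
proof -
  have "j1 \<in> V" using j1 basis_bicomp_subset[OF K] by auto
  then have "Jbar V E w j1 j1 \<noteq> 0" using Jbar_nonzero_iff K j1 unfolding K_tilde_def by blast
  then have "set_weight w (trees_K_at E K j1) \<noteq> 0" using Jbar_diag[OF K j1] by auto
  then show ?thesis using Jbar_product[OF K j1 i] Jbar_product[OF K j2 i] by (simp add: field_simps)
qed

end

theorem theorem2:
  fixes n :: nat and E :: "(nat \<times> nat) set" and w :: "nat \<times> nat \<Rightarrow> real"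
  assumes arcs: "E \<subseteq> {(j, i). j \<in> {1..n} \<and> i \<in> {1..n} \<and> j \<noteq> i}"
    and pos: "\<forall>a\<in>E. w a > 0"
  shows
    "((\<forall>i\<in>{1..n}. \<forall>j\<in>{1..n}. Jbar {1..n} E w i j \<ge> 0) \<and>
      (\<forall>i\<in>{1..n}. (\<Sum>k\<in>{1..n}. Jbar {1..n} E w i k) = 1))
   \<and>
     (\<forall>i\<in>{1..n}. \<forall>j\<in>{1..n}.
        Jbar {1..n} E w i j \<noteq> 0 \<longleftrightarrow> j \<in> K_tilde {1..n} E \<and> (j, i) \<in> E\<^sup>*)
   \<and>
     (\<forall>K. basis_bicomp {1..n} E K \<longrightarrow>
       (\<forall>j\<in>K. \<forall>i\<in>{1..n}.
          Jbar {1..n} E w i j =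
            set_weight w (trees_K_at E K j) * set_weight w (P_K_to {1..n} E K i)
              / sigma_max {1..n} E w) \<and>
       (\<forall>j\<in>K. \<forall>i\<in>K_plus {1..n} E K.
          Jbar {1..n} E w i j = Jbar {1..n} E w j j \<and>
          Jbar {1..n} E w j j = set_weight w (trees_K_at E K j) / set_weight w (trees_K E K)))
   \<and>
     ((\<forall>K. basis_bicomp {1..n} E K \<longrightarrow> (\<Sum>j\<in>K. Jbar {1..n} E w j j) = 1) \<and>
      (\<forall>j\<in>{1..n}. undominated {1..n} E j \<longrightarrow> Jbar {1..n} E w j j = 1))
   \<and>
     (\<forall>K. basis_bicomp {1..n} E K \<longrightarrow> (\<forall>j1\<in>K. \<forall>j2\<in>K. \<forall>i\<in>{1..n}.
        Jbar {1..n} E w i j2 =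
          set_weight w (trees_K_at E K j2) / set_weight w (trees_K_at E K j1) * Jbar {1..n} E w i j1))"
proof -
  interpret weighted_digraph "{1..n}" E w
    using arcs pos by unfold_locales auto
  have row: "(\<forall>i\<in>{1..n}. \<forall>j\<in>{1..n}. Jbar {1..n} E w i j \<ge> 0) \<and>
      (\<forall>i\<in>{1..n}. (\<Sum>k\<in>{1..n}. Jbar {1..n} E w i k) = 1)"
    using Jbar_nonneg Jbar_row_sum by blast
  have support: "\<forall>i\<in>{1..n}. \<forall>j\<in>{1..n}.
      Jbar {1..n} E w i j \<noteq> 0 \<longleftrightarrow> j \<in> K_tilde {1..n} E \<and> (j, i) \<in> E\<^sup>*"
    using Jbar_nonzero_iff by blast
  have columns: "\<forall>K. basis_bicomp {1..n} E K \<longrightarrow>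
       (\<forall>j\<in>K. \<forall>i\<in>{1..n}. Jbar {1..n} E w i j =
          set_weight w (trees_K_at E K j) * set_weight w (P_K_to {1..n} E K i) / sigma_max {1..n} E w) \<and>
       (\<forall>j\<in>K. \<forall>i\<in>K_plus {1..n} E K. Jbar {1..n} E w i j = Jbar {1..n} E w j j \<and>
          Jbar {1..n} E w j j = set_weight w (trees_K_at E K j) / set_weight w (trees_K E K))"
    using Jbar_product Jbar_K_plus Jbar_diag by blast
  have undominated: "Jbar {1..n} E w j j = 1" if "undominated {1..n} E j" for j
    using Jbar_diag_sum[of "{j}"] that unfolding undominated_def by simp
  have diagonal: "(\<forall>K. basis_bicomp {1..n} E K \<longrightarrow> (\<Sum>j\<in>K. Jbar {1..n} E w j j) = 1) \<and>
      (\<forall>j\<in>{1..n}. undominated {1..n} E j \<longrightarrow> Jbar {1..n} E w j j = 1)"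
    using Jbar_diag_sum undominated by blast
  have ratio: "\<forall>K. basis_bicomp {1..n} E K \<longrightarrow> (\<forall>j1\<in>K. \<forall>j2\<in>K. \<forall>i\<in>{1..n}.
      Jbar {1..n} E w i j2 =
        set_weight w (trees_K_at E K j2) / set_weight w (trees_K_at E K j1) * Jbar {1..n} E w i j1)"
    using Jbar_column_ratio by blast
  show ?thesis using row support columns diagonal ratio by blast
qed

end
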